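(* Let $Q=\{q_1,\ldots,q_n\}\subset\mathbb{P}^1$ be distinct points and $\vec g=(g_1,\ldots,g_n)$ effective divisors on $[0,1)$ of common degree $r$, $g_i=\sum_\alpha m_i(\alpha)[\alpha]$, with $\sum_{i,\alpha}m_i(\alpha)\alpha\in\mathbb{Z}$. Suppose the defect is zero, $r(n-2)-\sum_i T(g_i)=\delta(\vec g)=0$, but the superdefect is strictly positive, $\sigma(\vec g)>0$. Then it is possible to choose good arrangements $a_{i,1},\ldots,a_{i,r}$ of the $g_i$ and an integer $k_1$ such that, defining $k_2,\ldots,k_r$ by $k_{j+1}=\tau_j+k_j+2-n$, the parabolic bundle $E=\bigoplus_{j=1}^rE^j$, $E^j=[k_j;a_{1,j},\ldots,a_{n,j}]$, has $\deg^{\rm par}(E)=0$.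
   Context: A parabolic line bundle $[k;a_1,\ldots,a_n]$ ($k\in\mathbb{Z}$, $a_i\in[0,1)$) is $\mathcal{O}(k)$ with weight $a_i$ at $q_i$; its parabolic degree is $k+\sum_ia_i$, additive in direct sums. An arrangement of $g_i$ is a sequence $a_{i,1},\ldots,a_{i,r}\in[0,1)$ in which each $\alpha$ occurs $m_i(\alpha)$ times; indices modulo $r$. It is good if $\#\{t: a_{i,t}\ge a_{i,t+1}\}$ is minimal, the minimum being $T(g_i)$. $\tau_j=\#\{i: a_{i,j}\geq a_{i,j+1}\}$. With $\nu(g_i)=\max_\alpha m_i(\alpha)$, the superdefect is $\sigma(\vec g)=\sum_i\bigl(r^2-\sum_\alpha m_i(\alpha)^2-r(r-\nu(g_i))\bigr)$. *)

theory Defs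
  imports Complex_Main "HOL-Library.Multiset"
begin

text \<open>An arrangement of a divisor D (a multiset of weights in [0,1)) is a list xs
  with mset xs = D; positions are 0..r-1 and taken cyclically modulo r = length xs.\<close>

definition descents :: "real list \<Rightarrow> nat" where
  "descents xs = card {t. t < length xs \<and> xs ! t \<ge> xs ! ((t + 1) mod length xs)}"

definition T_min :: "real multiset \<Rightarrow> nat" where
  "T_min D = Min (descents ` {xs. mset xs = D})"

definition good_arrangement :: "real multiset \<Rightarrow> real list \<Rightarrow> bool" where
  "good_arrangement D xs \<longleftrightarrow> mset xs = D \<and> descents xs = T_min D"

definition nu :: "real multiset \<Rightarrow> nat" where
  "nu D = (if D = {#} then 0 else Max (count D ` set_mset D))"

definition superdefect :: "nat \<Rightarrow> nat \<Rightarrow> (nat \<Rightarrow> real multiset) \<Rightarrow> int" where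
  "superdefect n r g = (\<Sum>i<n. int r ^ 2 - (\<Sum>\<alpha>\<in>set_mset (g i). int (count (g i) \<alpha>) ^ 2)
                               - int r * (int r - int (nu (g i))))"

definition defect :: "nat \<Rightarrow> nat \<Rightarrow> (nat \<Rightarrow> real multiset) \<Rightarrow> int" where
  "defect n r g = int r * (int n - 2) - (\<Sum>i<n. int (T_min (g i)))"

definition tau :: "nat \<Rightarrow> nat \<Rightarrow> (nat \<Rightarrow> real list) \<Rightarrow> nat \<Rightarrow> nat" where
  "tau n r a j = card {i. i < n \<and> a i ! j \<ge> a i ! ((j + 1) mod r)}"

definition par_deg_line :: "int \<Rightarrow> real list \<Rightarrow> real" where
  "par_deg_line k ws = of_int k + sum_list ws"

definition par_deg_sum :: "nat \<Rightarrow> nat \<Rightarrow> (nat \<Rightarrow> int) \<Rightarrow> (nat \<Rightarrow> real list) \<Rightarrow> real" where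
  "par_deg_sum n r k a = (\<Sum>j<r. par_deg_line (k j) (map (\<lambda>i. a i ! j) [0..<n]))"

end

theory Submission
  imports Defs "HOL-Number_Theory.Cong"
begin

text \<open>Write \<open>Q(a)\<close> for the sum of the descent positions of a cyclic arrangement \<open>a\<close>.
  Since the defect vanishes, \<open>\<Sum>\<^sub>j \<tau>\<^sub>j = \<Sum>\<^sub>i T(g\<^sub>i) = r(n - 2)\<close>, so the recursion for the
  \<open>k\<^sub>j\<close> closes up and \<open>\<Sum>\<^sub>j k\<^sub>j = r k\<^sub>1 - \<Sum>\<^sub>i Q(a\<^sub>i) - (2 - n) r(r - 1)/2\<close>. Hence a suitable
  \<open>k\<^sub>1\<close> makes the parabolic degree vanish exactly when \<open>\<Sum>\<^sub>i Q(a\<^sub>i)\<close> has a prescribed residue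
  modulo \<open>r\<close>.

  Any two occurrences of one value in a cyclic arrangement are separated by a descent, so every
  arrangement of \<open>g\<close> has at least \<open>\<nu>(g)\<close> descents; distributing the values over \<open>\<nu>(g)\<close>
  increasing blocks attains this, so good arrangements have exactly \<open>\<nu>(g)\<close> descents. Rotating
  a good arrangement by one step changes \<open>Q\<close> by \<open>-\<nu>(g)\<close> modulo \<open>r\<close>, while choosing which
  \<open>m\<close> blocks contain a value of multiplicity \<open>m < \<nu>(g)\<close> moves \<open>Q\<close> through
  \<open>m(\<nu>(g) - m) + 1 \<ge> \<nu>(g)\<close> consecutive values. Positive superdefect provides such a value in
  some \<open>g\<^sub>i\<close>, so \<open>Q(a\<^sub>i)\<close> attains every residue modulo \<open>r\<close>.\<close>

section \<open>Descents of cyclic lists\<close>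

definition descent_set :: "'a::linorder list \<Rightarrow> nat set" where
  "descent_set xs = {t. t < length xs \<and> xs ! t \<ge> xs ! ((t + 1) mod length xs)}"

definition descent_sum :: "'a::linorder list \<Rightarrow> nat" where
  "descent_sum xs = \<Sum>(descent_set xs)"

lemma descents_eq_card_descent_set: "descents xs = card (descent_set xs)"
  by (simp add: descents_def descent_set_def)

lemma descent_set_subset: "descent_set xs \<subseteq> {..<length xs}"
  by (auto simp: descent_set_def)

lemma descent_set_Nil [simp]: "descent_set [] = {}"
  by (simp add: descent_set_def)

lemma finite_descent_set [simp]: "finite (descent_set xs)"
  using descent_set_subset finite_subset by blast

lemma mset_rotate [simp]: "mset (rotate n xs) = mset xs"
  by (metis append_take_drop_id mset_append rotate_drop_take union_commute)

lemma count_mset_eq_card: "count (mset xs) x = card {i. i < length xs \<and> xs ! i = x}"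
  by (simp add: count_mset count_list_eq_length_filter length_filter_conv_card eq_commute)

lemma nth_less_nth_if_ascending:
  fixes xs :: "'a::linorder list"
  assumes "s < s'" "s' < length xs" "\<And>u. s \<le> u \<Longrightarrow> u < s' \<Longrightarrow> xs ! u < xs ! Suc u"
  shows "xs ! s < xs ! s'"
  using assms
proof (induction s')
  case (Suc s')
  show ?case
  proof (cases "s = s'")
    case False
    then have "xs ! s < xs ! s'" using Suc by auto
    also have "\<dots> < xs ! Suc s'" using Suc.prems False by auto
    finally show ?thesis .
  qed (use Suc.prems in auto)
qed simp

lemma descent_set_nonempty:
  fixes xs :: "'a::linorder list"
  assumes "xs \<noteq> []"
  shows "descent_set xs \<noteq> {}"
proof
  assume "descent_set xs = {}"
  then have asc: "xs ! t < xs ! ((t + 1) mod length xs)" if "t < length xs" for t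
    using that by (auto simp: descent_set_def not_le)
  define r where "r = length xs - 1"
  have r: "length xs = Suc r" using assms r_def by simp
  have "xs ! 0 \<le> xs ! r"
  proof (cases "r = 0")
    case False
    have "xs ! 0 < xs ! r"
    proof (rule nth_less_nth_if_ascending)
      fix u assume "u < r"
      then show "xs ! u < xs ! Suc u" using asc[of u] r by simp
    qed (use False r in auto)
    then show ?thesis by simp
  qed simp
  also have "\<dots> < xs ! 0" using asc[of r] r by simp
  finally show False by simp
qed

lemma mem_descent_set_rotate:
  fixes xs :: "'a::linorder list"
  assumes "t < length xs"
  shows "t \<in> descent_set (rotate p xs) \<longleftrightarrow> (t + p) mod length xs \<in> descent_set xs"
proof -
  let ?r = "length xs"
  have r: "0 < ?r" using assms by linarith
  have "rotate p xs ! ((t + 1) mod ?r) = xs ! ((p + (t + 1) mod ?r) mod ?r)"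
    using r by (intro nth_rotate) simp
  also have "(p + (t + 1) mod ?r) mod ?r = ((t + p) mod ?r + 1) mod ?r"
    by (simp add: mod_simps add.commute add.left_commute)
  finally have "rotate p xs ! ((t + 1) mod ?r) = xs ! (((t + p) mod ?r + 1) mod ?r)" .
  moreover have "rotate p xs ! t = xs ! ((t + p) mod ?r)"
    using assms by (simp add: nth_rotate add.commute)
  ultimately show ?thesis using assms r by (auto simp: descent_set_def)
qed

lemma bij_betw_add_mod:
  fixes r p :: nat
  shows "bij_betw (\<lambda>t. (t + p) mod r) {..<r} {..<r}"
proof (cases "r = 0")
  case False
  have "inj_on (\<lambda>t. (t + p) mod r) {..<r}"
    by (rule inj_onI) (metis cong_add_rcancel_nat cong_def lessThan_iff mod_less)
  moreover have "(\<lambda>t. (t + p) mod r) ` {..<r} = {..<r}"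
    by (rule endo_inj_surj) (use calculation False in auto)
  ultimately show ?thesis by (simp add: bij_betw_def)
qed (simp add: bij_betw_def)

lemma bij_betw_descent_set_rotate:
  fixes xs :: "'a::linorder list"
  shows "bij_betw (\<lambda>t. (t + p) mod length xs) (descent_set (rotate p xs)) (descent_set xs)"
proof -
  let ?h = "\<lambda>t. (t + p) mod length xs"
  have bij: "bij_betw ?h {..<length xs} {..<length xs}" by (rule bij_betw_add_mod)
  have pre: "descent_set (rotate p xs) = {t \<in> {..<length xs}. ?h t \<in> descent_set xs}"
    using descent_set_subset[of "rotate p xs"] mem_descent_set_rotate[of _ xs p] by auto
  show ?thesis
    unfolding pre using bij descent_set_subset[of xs]
    by (auto simp: bij_betw_def inj_on_def image_iff)
qed

lemma card_descent_set_rotate: "card (descent_set (rotate p xs)) = card (descent_set xs)"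
  using bij_betw_descent_set_rotate bij_betw_same_card by blast

lemma descent_sum_rotate_cong:
  fixes xs :: "'a::linorder list"
  shows "[int (descent_sum (rotate p xs)) = int (descent_sum xs) - int p * int (card (descent_set xs))]
           (mod int (length xs))"
proof -
  let ?D = "descent_set (rotate p xs)"
  have "int (descent_sum xs) = (\<Sum>t\<in>?D. int ((t + p) mod length xs))"
    unfolding descent_sum_def of_nat_sum
    using sum.reindex_bij_betw[OF bij_betw_descent_set_rotate, of int p xs] by simp
  also have "[\<dots> = (\<Sum>t\<in>?D. int t + int p)] (mod int (length xs))"
    by (rule cong_sum) (simp add: cong_def zmod_int)
  also have "(\<Sum>t\<in>?D. int t + int p) = int (descent_sum (rotate p xs)) + int p * int (card (descent_set xs))"
    by (simp add: descent_sum_def sum.distrib card_descent_set_rotate)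
  finally show ?thesis
    by (simp add: cong_iff_dvd_diff dvd_diff_commute algebra_simps)
qed

lemma ex_rotate_descent_sum_cong:
  fixes zs :: "'a::linorder list"
  assumes "[int (descent_sum zs) = X] (mod int (card (descent_set zs)))"
  shows "\<exists>p. [int (descent_sum (rotate p zs)) = X] (mod int (length zs))"
proof (cases "zs = []")
  case False
  let ?r = "int (length zs)" and ?c = "int (card (descent_set zs))"
  obtain y where y: "int (descent_sum zs) - X = ?c * y"
    using assms by (metis cong_iff_dvd_diff cong_sym dvdE)
  define p where "p = nat (y mod ?r)"
  have "[int p = y] (mod ?r)"
    using False by (simp add: p_def cong_def)
  then have "[int (descent_sum zs) - int p * ?c = int (descent_sum zs) - y * ?c] (mod ?r)"
    by (intro cong_diff cong_refl cong_mult)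
  then have "[int (descent_sum (rotate p zs)) = X] (mod ?r)"
    using descent_sum_rotate_cong[of p zs] y by (simp add: cong_trans algebra_simps)
  then show ?thesis ..
qed (use assms in \<open>simp add: descent_sum_def\<close>)

lemma count_le_card_descent_set_if_last_descent:
  fixes ys :: "'a::linorder list"
  assumes last: "length ys - 1 \<in> descent_set ys"
  shows "count (mset ys) b \<le> card (descent_set ys)"
proof -
  let ?O = "{i. i < length ys \<and> ys ! i = b}"
  define next_descent where "next_descent s = (LEAST t. s \<le> t \<and> t \<in> descent_set ys)" for s
  have next_descent: "s \<le> next_descent s \<and> next_descent s \<in> descent_set ys" if "s < length ys" for s
    unfolding next_descent_def by (rule LeastI[of _ "length ys - 1"]) (use last that in auto)
  \<comment> \<open>Between two occurrences of \<open>b\<close> there is a descent, otherwise \<open>b < b\<close>.\<close>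
  have no_collision: "next_descent s \<noteq> next_descent s'" if "s \<in> ?O" "s' \<in> ?O" "s < s'" for s s'
  proof
    assume eq: "next_descent s = next_descent s'"
    have "ys ! s < ys ! s'"
    proof (rule nth_less_nth_if_ascending)
      fix u assume u: "s \<le> u" "u < s'"
      then have "u < next_descent s" using eq next_descent[of s'] that by auto
      then have "\<not> (s \<le> u \<and> u \<in> descent_set ys)"
        unfolding next_descent_def by (rule not_less_Least)
      then have "u \<notin> descent_set ys" using u by simp
      moreover have "Suc u < length ys" using u that by auto
      ultimately show "ys ! u < ys ! Suc u" by (auto simp: descent_set_def not_le)
    qed (use that in auto)
    then show False using that by simp
  qed
  have "inj_on next_descent ?O"
  proof (rule inj_onI)
    fix s s' assume "s \<in> ?O" "s' \<in> ?O" "next_descent s = next_descent s'"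
    then show "s = s'" using no_collision[of s s'] no_collision[of s' s] by (metis linorder_neqE_nat)
  qed
  moreover have "next_descent ` ?O \<subseteq> descent_set ys" using next_descent by auto
  ultimately have "card ?O \<le> card (descent_set ys)" by (simp add: card_inj_on_le)
  then show ?thesis by (simp add: count_mset_eq_card)
qed

lemma count_le_card_descent_set:
  fixes xs :: "'a::linorder list"
  shows "count (mset xs) b \<le> card (descent_set xs)"
proof (cases "xs = []")
  case False
  then obtain d where d: "d \<in> descent_set xs" using descent_set_nonempty by blast
  let ?ys = "rotate (Suc d) xs"
  have "d < length xs" using d descent_set_subset by auto
  moreover have "length xs - 1 + Suc d = d + length xs" using calculation by simp
  ultimately have "(length xs - 1 + Suc d) mod length xs = d" by simp
  then have "length xs - 1 \<in> descent_set ?ys"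
    using mem_descent_set_rotate[of "length xs - 1" xs "Suc d"] d False by simp
  then have "count (mset ?ys) b \<le> card (descent_set ?ys)"
    by (intro count_le_card_descent_set_if_last_descent) simp
  then show ?thesis by (simp only: mset_rotate card_descent_set_rotate)
qed simp

section \<open>Concatenations of increasing blocks\<close>

lemma descent_in_concat_at_block_end:
  fixes bs :: "'a::linorder list list"
  assumes "\<forall>b\<in>set bs. b \<noteq> [] \<and> sorted_wrt (<) b"
    and "Suc t < length (concat bs)" "concat bs ! t \<ge> concat bs ! Suc t"
  shows "\<exists>k. Suc k < length bs \<and> Suc t = length (concat (take (Suc k) bs))"
  using assms
proof (induction bs arbitrary: t)
  case (Cons b bs)
  consider "Suc t < length b" | "Suc t = length b" | "length b < Suc t" by linarith
  then show ?case
  proof cases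
    case 1
    then have "b ! t < b ! Suc t"
      using Cons.prems(1) sorted_wrt_nth_less by fastforce
    then show ?thesis using 1 Cons.prems(3) by (simp add: nth_append)
  next
    case 2
    then have "bs \<noteq> []" using Cons.prems(2) by auto
    then show ?thesis using 2 by (intro exI[of _ 0]) auto
  next
    case 3
    define t' where "t' = t - length b"
    have t: "t = length b + t'" using 3 t'_def by simp
    then have "concat bs ! t' \<ge> concat bs ! Suc t'" "Suc t' < length (concat bs)"
      using Cons.prems by (auto simp: nth_append)
    then have "\<exists>k. Suc k < length bs \<and> Suc t' = length (concat (take (Suc k) bs))"
      using Cons.IH[of t'] Cons.prems(1) by simp
    then obtain k where "Suc k < length bs" "Suc t' = length (concat (take (Suc k) bs))" by blast
    then show ?thesis using t by (intro exI[of _ "Suc k"]) auto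
  qed
qed simp

lemma descent_set_concat_subset:
  fixes bs :: "'a::linorder list list"
  assumes "\<forall>b\<in>set bs. b \<noteq> [] \<and> sorted_wrt (<) b"
  shows "descent_set (concat bs) \<subseteq> (\<lambda>k. length (concat (take (Suc k) bs)) - 1) ` {..<length bs}"
proof
  fix t assume t: "t \<in> descent_set (concat bs)"
  then have tr: "t < length (concat bs)" using descent_set_subset by auto
  show "t \<in> (\<lambda>k. length (concat (take (Suc k) bs)) - 1) ` {..<length bs}"
  proof (cases "Suc t < length (concat bs)")
    case True
    then have "concat bs ! t \<ge> concat bs ! Suc t" using t by (simp add: descent_set_def)
    then obtain k where "Suc k < length bs" "Suc t = length (concat (take (Suc k) bs))"
      using descent_in_concat_at_block_end[OF assms True] by blast
    then show ?thesis by (intro image_eqI[of _ _ k]) auto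
  next
    case False
    then have "t = length (concat (take (Suc (length bs - 1)) bs)) - 1"
      using tr by (cases bs) auto
    moreover have "bs \<noteq> []" using tr by auto
    ultimately show ?thesis by (intro image_eqI[of _ _ "length bs - 1"]) auto
  qed
qed

lemma descent_set_concat_ascending_blocks:
  fixes bs :: "'a::linorder list list"
  assumes blocks: "\<forall>b\<in>set bs. b \<noteq> [] \<and> sorted_wrt (<) b"
    and in_every_block: "count (mset (concat bs)) c = length bs"
  shows "card (descent_set (concat bs)) = length bs"
    and "descent_sum (concat bs) = (\<Sum>k<length bs. length (concat (take (Suc k) bs)) - 1)"
proof -
  let ?end = "\<lambda>k. length (concat (take (Suc k) bs)) - 1"
  have sub: "descent_set (concat bs) \<subseteq> ?end ` {..<length bs}"
    by (rule descent_set_concat_subset[OF blocks])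
  have ends: "card (?end ` {..<length bs}) \<le> length bs"
    using card_image_le[of "{..<length bs}" ?end] by simp
  have "length bs \<le> card (descent_set (concat bs))"
    using count_le_card_descent_set[of "concat bs" c] in_every_block by simp
  moreover have "card (descent_set (concat bs)) \<le> card (?end ` {..<length bs})"
    using sub by (intro card_mono) auto
  ultimately have card_eq: "card (descent_set (concat bs)) = length bs"
    and card_ends: "card (?end ` {..<length bs}) = length bs"
    using ends by auto
  have set_eq: "descent_set (concat bs) = ?end ` {..<length bs}"
    by (rule card_subset_eq) (use sub card_eq card_ends in auto)
  have inj: "inj_on ?end {..<length bs}"
    by (rule eq_card_imp_inj_on) (use card_ends in auto)
  show "card (descent_set (concat bs)) = length bs" by (rule card_eq)
  show "descent_sum (concat bs) = (\<Sum>k<length bs. ?end k)"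
    unfolding descent_sum_def set_eq using sum.reindex[OF inj, of id] by simp
qed

lemma sum_prefix_sums:
  fixes f :: "nat \<Rightarrow> 'a::comm_ring_1"
  shows "(\<Sum>j<N. \<Sum>l<j. f l) = (\<Sum>l<N. (of_nat N - 1 - of_nat l) * f l)"
proof (induction N)
  case (Suc N)
  then show ?case by (simp add: sum.distrib[symmetric] algebra_simps)
qed simp

lemma sum_prefix_sums_atMost:
  fixes f :: "nat \<Rightarrow> 'a::comm_ring_1"
  shows "(\<Sum>j<N. \<Sum>l\<le>j. f l) = (\<Sum>l<N. (of_nat N - of_nat l) * f l)"
proof (induction N)
  case (Suc N)
  then show ?case by (simp add: lessThan_Suc_atMost[symmetric] sum.distrib[symmetric] algebra_simps)
qed simp

definition arrangement_block :: "'a multiset \<Rightarrow> 'a \<Rightarrow> nat set \<Rightarrow> nat \<Rightarrow> 'a set" where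
  "arrangement_block D \<alpha> A k = {v \<in> set_mset D. if v = \<alpha> then k \<in> A else k < count D v}"

lemma finite_arrangement_block [simp]: "finite (arrangement_block D \<alpha> A k)"
  by (simp add: arrangement_block_def)

definition block_arrangement :: "'a::linorder multiset \<Rightarrow> 'a \<Rightarrow> nat set \<Rightarrow> nat \<Rightarrow> 'a list" where
  "block_arrangement D \<alpha> A N =
     concat (map (\<lambda>k. sorted_list_of_set (arrangement_block D \<alpha> A k)) [0..<N])"

context
  fixes D :: "'a::linorder multiset" and \<alpha> \<beta> :: 'a and A :: "nat set" and N :: nat
  assumes count_le: "\<And>v. count D v \<le> N" and count_\<beta>: "count D \<beta> = N" and \<beta>_ne_\<alpha>: "\<beta> \<noteq> \<alpha>"
    and A_sub: "A \<subseteq> {..<N}" and card_A: "card A = count D \<alpha>"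
begin

lemma card_arrangement_block:
  "card (arrangement_block D \<alpha> A k) = card {v \<in> set_mset D - {\<alpha>}. k < count D v} + of_bool (k \<in> A)"
proof -
  have "\<alpha> \<in># D" if "k \<in> A"
    using that card_A finite_subset[OF A_sub] by (metis card_0_eq count_eq_zero_iff empty_iff finite_lessThan)
  then have "arrangement_block D \<alpha> A k = {v \<in> set_mset D - {\<alpha>}. k < count D v} \<union> (if k \<in> A then {\<alpha>} else {})"
    by (auto simp: arrangement_block_def)
  then show ?thesis by (auto simp: card_insert_if)
qed

lemma ascending_blocks_block_arrangement:
  "\<forall>b\<in>set (map (\<lambda>k. sorted_list_of_set (arrangement_block D \<alpha> A k)) [0..<N]).
     b \<noteq> [] \<and> sorted_wrt (<) b"
proof -
  have "\<beta> \<in> arrangement_block D \<alpha> A k" if "k < N" for k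
    using that count_\<beta> \<beta>_ne_\<alpha> by (auto simp: arrangement_block_def simp flip: count_greater_zero_iff)
  then have "arrangement_block D \<alpha> A k \<noteq> {}" if "k < N" for k
    using that by blast
  then show ?thesis by (auto simp: strict_sorted_list_of_set)
qed

lemma mset_block_arrangement: "mset (block_arrangement D \<alpha> A N) = D"
proof (rule multiset_eqI)
  fix v
  have count_block: "count (mset (sorted_list_of_set (arrangement_block D \<alpha> A k))) v =
      (if v \<in> arrangement_block D \<alpha> A k then 1 else 0)" for k
    using distinct_count_atmost_1[of "sorted_list_of_set (arrangement_block D \<alpha> A k)"] by simp
  have "count (mset (block_arrangement D \<alpha> A N)) v = card {k \<in> {..<N}. v \<in> arrangement_block D \<alpha> A k}"
    by (simp add: block_arrangement_def mset_concat interv_sum_list_conv_sum_set_nat count_sum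
        atLeast0LessThan count_block sum.If_cases Int_def)
  also have "\<dots> = count D v"
  proof (cases "v \<in># D")
    case True
    then show ?thesis
    proof (cases "v = \<alpha>")
      case True
      then have "{k \<in> {..<N}. v \<in> arrangement_block D \<alpha> A k} = A"
        using \<open>v \<in># D\<close> A_sub by (auto simp: arrangement_block_def)
      then show ?thesis using card_A True by simp
    next
      case False
      then have "{k \<in> {..<N}. v \<in> arrangement_block D \<alpha> A k} = {..<count D v}"
        using \<open>v \<in># D\<close> count_le[of v] by (auto simp: arrangement_block_def)
      then show ?thesis by simp
    qed
  qed (simp add: arrangement_block_def not_in_iff)
  finally show "count (mset (block_arrangement D \<alpha> A N)) v = count D v" .
qed

lemma card_descent_set_block_arrangement: "card (descent_set (block_arrangement D \<alpha> A N)) = N"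
  using descent_set_concat_ascending_blocks(1)[OF ascending_blocks_block_arrangement, of \<beta>]
    mset_block_arrangement count_\<beta>
  by (simp add: block_arrangement_def)

lemma descent_sum_block_arrangement:
  "int (descent_sum (block_arrangement D \<alpha> A N)) + int (\<Sum>A) =
     (\<Sum>k<N. \<Sum>j\<le>k. int (card {v \<in> set_mset D - {\<alpha>}. j < count D v})) + int N * (int (count D \<alpha>) - 1)"
proof -
  let ?bs = "map (\<lambda>k. sorted_list_of_set (arrangement_block D \<alpha> A k)) [0..<N]"
  let ?c = "\<lambda>j. int (card {v \<in> set_mset D - {\<alpha>}. j < count D v})"
  have len: "int (length (concat (take (Suc k) ?bs))) = (\<Sum>j\<le>k. ?c j) + (\<Sum>j\<le>k. of_bool (j \<in> A))"
    if "k < N" for k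
  proof -
    have "length (concat (take (Suc k) ?bs)) = (\<Sum>j<Suc k. card (arrangement_block D \<alpha> A j))"
      using that by (simp add: take_map length_concat interv_sum_list_conv_sum_set_nat atLeast0LessThan
          del: upt_Suc)
    then show ?thesis
      by (simp add: lessThan_Suc_atMost card_arrangement_block sum.distrib)
  qed
  have "1 \<le> length (concat (take (Suc k) ?bs))" if "k < N" for k
  proof -
    have "sorted_list_of_set (arrangement_block D \<alpha> A 0) \<noteq> []"
      using ascending_blocks_block_arrangement that by auto
    then show ?thesis using that by (simp add: upt_conv_Cons Suc_le_eq card_gt_0_iff)
  qed
  then have "int (descent_sum (block_arrangement D \<alpha> A N)) = (\<Sum>k<N. int (length (concat (take (Suc k) ?bs))) - 1)"
    using descent_set_concat_ascending_blocks(2)[OF ascending_blocks_block_arrangement, of \<beta>]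
      mset_block_arrangement count_\<beta>
    by (simp add: block_arrangement_def of_nat_diff)
  also have "\<dots> = (\<Sum>k<N. \<Sum>j\<le>k. ?c j) + (\<Sum>k<N. \<Sum>j\<le>k. of_bool (j \<in> A)) - int N"
    by (simp add: len sum.distrib sum_subtractf)
  also have "(\<Sum>k<N. \<Sum>j\<le>k. of_bool (j \<in> A)) = (\<Sum>j<N. (int N - int j) * of_bool (j \<in> A))"
    by (rule sum_prefix_sums_atMost)
  also have "(\<Sum>j<N. (int N - int j) * of_bool (j \<in> A)) = int N * int (count D \<alpha>) - int (\<Sum>A)"
    using A_sub card_A by (simp add: Int_absorb1 sum_subtractf of_nat_sum)
  finally show ?thesis by (simp add: algebra_simps)
qed

end

section \<open>Descent sums of good arrangements\<close>

lemma count_le_nu: "count D v \<le> nu D"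
  by (cases "v \<in># D") (auto simp: nu_def not_in_iff)

lemma ex_count_eq_nu:
  assumes "D \<noteq> {#}"
  shows "\<exists>\<beta>. count D \<beta> = nu D"
proof -
  have "Max (count D ` set_mset D) \<in> count D ` set_mset D"
    using assms by (intro Max_in) auto
  then obtain \<beta> where "Max (count D ` set_mset D) = count D \<beta>" by blast
  then show ?thesis using assms by (auto simp: nu_def)
qed

lemma nu_le_card_descent_set: "nu (mset xs) \<le> card (descent_set xs)"
proof (cases "xs = []")
  case False
  then obtain \<beta> where "count (mset xs) \<beta> = nu (mset xs)" using ex_count_eq_nu by fastforce
  then show ?thesis using count_le_card_descent_set[of xs \<beta>] by simp
qed (simp add: nu_def)

lemma finite_arrangements: "finite {xs. mset xs = D}"
proof (rule finite_subset)
  show "{xs. mset xs = D} \<subseteq> {xs. set xs \<subseteq> set_mset D \<and> length xs = size D}" by auto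
qed (simp add: finite_lists_length_eq)

lemma ex_good_arrangement: "\<exists>xs. good_arrangement D xs"
proof -
  have "descents ` {xs. mset xs = D} \<noteq> {}" using ex_mset[of D] by auto
  then have "T_min D \<in> descents ` {xs. mset xs = D}"
    unfolding T_min_def using finite_arrangements by (intro Min_in) auto
  then show ?thesis by (auto simp: good_arrangement_def)
qed

lemma good_arrangementI_card_nu:
  assumes "mset ys = D" "card (descent_set ys) = nu D"
  shows "good_arrangement D ys"
proof -
  have "T_min D = descents ys"
    unfolding T_min_def
  proof (rule Min_eqI)
    fix y assume "y \<in> descents ` {xs. mset xs = D}"
    then obtain xs where "mset xs = D" "y = descents xs" by blast
    then show "descents ys \<le> y"
      using assms nu_le_card_descent_set[of xs] by (simp add: descents_eq_card_descent_set)
  qed (use assms finite_arrangements in auto)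
  then show ?thesis using assms by (simp add: good_arrangement_def)
qed

lemma ex_subset_lessThan_card_sum:
  fixes m N x :: nat
  assumes "m \<le> N" "x \<le> m * (N - m)"
  shows "\<exists>A \<subseteq> {..<N}. card A = m \<and> \<Sum>A = \<Sum>{..<m} + x"
  using assms
proof (induction m arbitrary: N x)
  case 0
  then show ?case by (intro exI[of _ "{}"]) auto
next
  case (Suc m)
  show ?case
  proof (cases "x \<le> N - Suc m")
    case True
    let ?A = "insert (m + x) {..<m}"
    have "card ?A = Suc m" "\<Sum>?A = \<Sum>{..<Suc m} + x" by simp_all
    moreover have "?A \<subseteq> {..<N}" using True Suc.prems by auto
    ultimately show ?thesis by blast
  next
    case False
    define x' where "x' = x - (N - Suc m)"
    have "x' \<le> m * (N - 1 - m)" using Suc.prems unfolding x'_def by (simp add: diff_le_mono)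
    moreover have "m \<le> N - 1" using Suc.prems by simp
    ultimately obtain A where A: "A \<subseteq> {..<N - 1}" "card A = m" "\<Sum>A = \<Sum>{..<m} + x'"
      using Suc.IH by blast
    let ?A = "insert (N - 1) A"
    have "finite A" "N - 1 \<notin> A" using A finite_subset by auto
    then have "card ?A = Suc m" "\<Sum>?A = \<Sum>{..<Suc m} + x"
      using A False Suc.prems unfolding x'_def by simp_all
    moreover have "?A \<subseteq> {..<N}" using A Suc.prems by auto
    ultimately show ?thesis by blast
  qed
qed

lemma ex_arrangement_descent_sum_cong_nu:
  fixes D :: "real multiset"
  assumes \<alpha>: "\<alpha> \<in># D" and less: "count D \<alpha> < nu D"
  shows "\<exists>zs. mset zs = D \<and> card (descent_set zs) = nu D \<and> [int (descent_sum zs) = Y] (mod int (nu D))"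
proof -
  let ?N = "nu D" and ?m = "count D \<alpha>"
  have "D \<noteq> {#}" using \<alpha> by auto
  then obtain \<beta> where \<beta>: "count D \<beta> = ?N" using ex_count_eq_nu by blast
  have "\<beta> \<noteq> \<alpha>" using \<beta> less by auto
  have m: "1 \<le> ?m" using \<alpha> by (simp add: Suc_le_eq)
  define C where "C = (\<Sum>k<?N. \<Sum>j\<le>k. int (card {v \<in> set_mset D - {\<alpha>}. j < count D v})) + int ?N * (int ?m - 1)"
  define x where "x = nat ((C - int (\<Sum>{..<?m}) - Y) mod int ?N)"
  have x_cong: "[int x = C - int (\<Sum>{..<?m}) - Y] (mod int ?N)"
    using less by (simp add: x_def cong_def)
  have "x < ?N" using less by (simp add: x_def nat_less_iff)
  moreover have "?N - 1 \<le> ?m * (?N - ?m)"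
  proof -
    have "?N - 1 = (?N - ?m) + (?m - 1) * 1" using m less by simp
    also have "\<dots> \<le> (?N - ?m) + (?m - 1) * (?N - ?m)" using less by (intro add_left_mono mult_le_mono2) simp
    also have "\<dots> = (1 + (?m - 1)) * (?N - ?m)" by (simp only: distrib_right mult_1)
    also have "\<dots> = ?m * (?N - ?m)" using m by simp
    finally show ?thesis .
  qed
  ultimately have "x \<le> ?m * (?N - ?m)" by linarith
  then obtain A where A: "A \<subseteq> {..<?N}" "card A = ?m" "\<Sum>A = \<Sum>{..<?m} + x"
    using ex_subset_lessThan_card_sum[of ?m ?N x] less by fastforce
  let ?zs = "block_arrangement D \<alpha> A ?N"
  have "int (descent_sum ?zs) = C - int (\<Sum>{..<?m}) - int x"
    using descent_sum_block_arrangement[OF count_le_nu \<beta> \<open>\<beta> \<noteq> \<alpha>\<close> A(1,2)] A(3)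
    unfolding C_def by simp
  also have "[\<dots> = Y] (mod int ?N)"
    using cong_diff[OF cong_refl x_cong, of "C - int (\<Sum>{..<?m})"] by simp
  finally show ?thesis
    using mset_block_arrangement[OF count_le_nu \<beta> \<open>\<beta> \<noteq> \<alpha>\<close> A(1,2)]
      card_descent_set_block_arrangement[OF count_le_nu \<beta> \<open>\<beta> \<noteq> \<alpha>\<close> A(1,2)]
    by blast
qed

lemma ex_good_arrangement_descent_sum_cong:
  fixes D :: "real multiset"
  assumes "\<alpha> \<in># D" "count D \<alpha> < nu D"
  shows "\<exists>ys. good_arrangement D ys \<and> [int (descent_sum ys) = X] (mod int (size D))"
proof -
  obtain zs where zs: "mset zs = D" "card (descent_set zs) = nu D"
    and "[int (descent_sum zs) = X] (mod int (nu D))"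
    using ex_arrangement_descent_sum_cong_nu[OF assms] by blast
  then obtain p where "[int (descent_sum (rotate p zs)) = X] (mod int (length zs))"
    using ex_rotate_descent_sum_cong[of zs X] by auto
  moreover have "good_arrangement D (rotate p zs)"
    using zs by (intro good_arrangementI_card_nu) (simp_all add: card_descent_set_rotate)
  moreover have "length zs = size D" using zs(1) by (metis size_mset)
  ultimately show ?thesis by auto
qed

section \<open>Parabolic degree\<close>

lemma ex_count_less_nu_if_superdefect_pos:
  assumes deg: "\<forall>i<n. size (g i) = r" and pos: "superdefect n r g > 0"
  shows "\<exists>i<n. \<exists>\<alpha>. \<alpha> \<in># g i \<and> count (g i) \<alpha> < nu (g i)"
proof (rule ccontr)
  assume uniform: "\<not> ?thesis"
  have "int r ^ 2 - (\<Sum>\<alpha>\<in>set_mset (g i). int (count (g i) \<alpha>) ^ 2) - int r * (int r - int (nu (g i))) = 0"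
    if i: "i < n" for i
  proof -
    have "count (g i) \<alpha> = nu (g i)" if "\<alpha> \<in># g i" for \<alpha>
      using uniform i that count_le_nu[of "g i" \<alpha>] by (meson le_neq_implies_less)
    then have "(\<Sum>\<alpha>\<in>set_mset (g i). int (count (g i) \<alpha>) ^ 2)
        = int (nu (g i)) * (\<Sum>\<alpha>\<in>set_mset (g i). int (count (g i) \<alpha>))"
      by (simp add: sum_distrib_left power2_eq_square)
    also have "(\<Sum>\<alpha>\<in>set_mset (g i). int (count (g i) \<alpha>)) = int r"
      using deg i by (simp flip: of_nat_sum size_multiset_overloaded_eq)
    finally show ?thesis by (simp add: algebra_simps power2_eq_square)
  qed
  then have "superdefect n r g = 0" by (simp add: superdefect_def)
  then show False using pos by simp
qed

lemma sum_tau_weighted: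
  fixes a :: "nat \<Rightarrow> real list" and w :: "nat \<Rightarrow> int"
  assumes len: "\<forall>i<n. length (a i) = r"
  shows "(\<Sum>j<r. w j * int (tau n r a j)) = (\<Sum>i<n. \<Sum>j\<in>descent_set (a i). w j)"
proof -
  have tau: "int (tau n r a j) = (\<Sum>i<n. of_bool (j \<in> descent_set (a i)))" if "j < r" for j
  proof -
    have "{i. i < n \<and> a i ! j \<ge> a i ! ((j + 1) mod r)} = {..<n} \<inter> {i. j \<in> descent_set (a i)}"
      using len that by (auto simp: descent_set_def)
    then show ?thesis by (simp add: tau_def)
  qed
  have "(\<Sum>j<r. w j * int (tau n r a j)) = (\<Sum>j<r. \<Sum>i<n. w j * of_bool (j \<in> descent_set (a i)))"
    by (intro sum.cong refl) (simp only: tau lessThan_iff sum_distrib_left)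
  also have "\<dots> = (\<Sum>i<n. \<Sum>j<r. w j * of_bool (j \<in> descent_set (a i)))"
    by (rule sum.swap)
  also have "\<dots> = (\<Sum>i<n. \<Sum>j\<in>descent_set (a i). w j)"
  proof (rule sum.cong[OF refl])
    fix i assume "i \<in> {..<n}"
    then have "descent_set (a i) \<subseteq> {..<r}" using len descent_set_subset by fastforce
    then show "(\<Sum>j<r. w j * of_bool (j \<in> descent_set (a i))) = (\<Sum>j\<in>descent_set (a i). w j)"
      by (simp add: Int_absorb1)
  qed
  finally show ?thesis .
qed

lemma par_deg_sum_eq_sums:
  assumes len: "\<forall>i<n. length (a i) = r"
  shows "par_deg_sum n r k a = real_of_int (\<Sum>j<r. k j) + (\<Sum>i<n. sum_list (a i))"
proof -
  have "par_deg_sum n r k a = (\<Sum>j<r. real_of_int (k j) + (\<Sum>i<n. a i ! j))"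
    by (simp add: par_deg_sum_def par_deg_line_def interv_sum_list_conv_sum_set_nat atLeast0LessThan)
  also have "\<dots> = real_of_int (\<Sum>j<r. k j) + (\<Sum>i<n. \<Sum>j<r. a i ! j)"
    by (simp add: sum.distrib sum.swap[of _ "{..<r}"])
  also have "(\<Sum>i<n. \<Sum>j<r. a i ! j) = (\<Sum>i<n. sum_list (a i))"
    using len by (intro sum.cong[OF refl]) (simp add: sum_list_sum_nth atLeast0LessThan)
  finally show ?thesis .
qed

lemma ex_par_deg_sum_zero:
  fixes a :: "nat \<Rightarrow> real list" and s :: int
  assumes len: "\<forall>i<n. length (a i) = r"
    and descents: "(\<Sum>i<n. int (card (descent_set (a i)))) = int r * (int n - 2)"
    and weights: "(\<Sum>i<n. sum_list (a i)) = of_int s"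
    and cong: "[(\<Sum>i<n. int (descent_sum (a i))) = s + (int n - 2) * (\<Sum>j<r. int j)] (mod int r)"
  shows "\<exists>k. (\<forall>j. Suc j < r \<longrightarrow> k (Suc j) = int (tau n r a j) + k j + 2 - int n)
           \<and> par_deg_sum n r k a = 0"
proof -
  define c where "c j = int (tau n r a j) + 2 - int n" for j
  define Q where "Q = (\<Sum>i<n. int (descent_sum (a i)))"
  define G where "G = (\<Sum>j<r. int j)"
  obtain k0 where k0: "Q - s - (int n - 2) * G = int r * k0"
    using cong unfolding Q_def G_def by (metis cong_iff_dvd_diff diff_diff_add dvdE)
  define k where "k j = k0 + (\<Sum>l<j. c l)" for j
  have "(\<Sum>j<r. c j) = (\<Sum>j<r. int (tau n r a j)) - int r * (int n - 2)"
    by (simp add: c_def sum.distrib sum_subtractf algebra_simps)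
  then have sum_c: "(\<Sum>j<r. c j) = 0"
    using sum_tau_weighted[OF len, of "\<lambda>_. 1"] descents by simp
  have weighted_sum_c: "(\<Sum>j<r. int j * c j) = Q - (int n - 2) * G"
    using sum_tau_weighted[OF len, of int]
    by (simp add: c_def Q_def G_def descent_sum_def algebra_simps sum.distrib sum_subtractf
        sum_distrib_left sum_distrib_right)
  have "(\<Sum>j<r. k j) = int r * k0 + (\<Sum>l<r. (int r - 1 - int l) * c l)"
    by (simp add: k_def sum.distrib sum_prefix_sums)
  also have "\<dots> = int r * k0 + (int r - 1) * (\<Sum>l<r. c l) - (\<Sum>l<r. int l * c l)"
    by (simp add: left_diff_distrib sum_subtractf sum_distrib_left)
  also have "\<dots> = - s"
    using sum_c weighted_sum_c k0 by (simp add: algebra_simps)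
  finally have sum_k: "(\<Sum>j<r. k j) = - s" .
  have "par_deg_sum n r k a = 0"
    unfolding par_deg_sum_eq_sums[OF len] sum_k weights by simp
  moreover have "\<forall>j. Suc j < r \<longrightarrow> k (Suc j) = int (tau n r a j) + k j + 2 - int n"
    by (simp add: k_def c_def)
  ultimately show ?thesis by blast
qed

lemma ex_good_arrangements_descent_sum_cong:
  fixes g :: "nat \<Rightarrow> real multiset"
  assumes deg: "\<forall>i<n. size (g i) = r"
    and i0: "i0 < n" "\<alpha> \<in># g i0" "count (g i0) \<alpha> < nu (g i0)"
  shows "\<exists>a. (\<forall>i<n. good_arrangement (g i) (a i)) \<and> [(\<Sum>i<n. int (descent_sum (a i))) = X] (mod int r)"
proof -
  obtain b where b: "\<And>i. good_arrangement (g i) (b i)"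
    by (rule that[of "\<lambda>i. SOME xs. good_arrangement (g i) xs"]) (rule someI_ex[OF ex_good_arrangement])
  define R where "R = (\<Sum>i\<in>{..<n} - {i0}. int (descent_sum (b i)))"
  obtain y where y: "good_arrangement (g i0) y" "[int (descent_sum y) = X - R] (mod int r)"
    using ex_good_arrangement_descent_sum_cong[OF i0(2,3)] deg i0(1) by blast
  define a where "a = b(i0 := y)"
  have "(\<Sum>i<n. int (descent_sum (a i))) = int (descent_sum (a i0)) + (\<Sum>i\<in>{..<n} - {i0}. int (descent_sum (a i)))"
    using i0(1) by (intro sum.remove) auto
  also have "\<dots> = int (descent_sum y) + R"
    unfolding R_def a_def by (auto intro!: sum.cong)
  moreover have "[int (descent_sum y) + R = X] (mod int r)"
    using cong_add[OF y(2) cong_refl[of R]] by simp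
  ultimately show ?thesis
    using b y(1) by (intro exI[of _ a]) (simp add: a_def)
qed

theorem theorem6p9:
  fixes n r :: nat and g :: "nat \<Rightarrow> real multiset"
  assumes deg: "\<forall>i<n. size (g i) = r"
    and range: "\<forall>i<n. \<forall>\<alpha>\<in>#g i. 0 \<le> \<alpha> \<and> \<alpha> < 1"
    and integral: "(\<Sum>i<n. \<Sum>\<^sub># (g i)) \<in> \<int>"
    and defect0: "defect n r g = 0"
    and superpos: "superdefect n r g > 0"
  shows "\<exists>a :: nat \<Rightarrow> real list. \<exists>k :: nat \<Rightarrow> int.
           (\<forall>i<n. good_arrangement (g i) (a i))
         \<and> (\<forall>j. Suc j < r \<longrightarrow> k (Suc j) = int (tau n r a j) + k j + 2 - int n)
         \<and> par_deg_sum n r k a = 0"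
proof -
  obtain i0 \<alpha> where i0: "i0 < n" "\<alpha> \<in># g i0" "count (g i0) \<alpha> < nu (g i0)"
    using ex_count_less_nu_if_superdefect_pos[OF deg superpos] by blast
  obtain s :: int where s: "(\<Sum>i<n. \<Sum>\<^sub># (g i)) = of_int s"
    using integral Ints_cases by metis
  obtain a where good: "\<forall>i<n. good_arrangement (g i) (a i)"
    and cong: "[(\<Sum>i<n. int (descent_sum (a i))) = s + (int n - 2) * (\<Sum>j<r. int j)] (mod int r)"
    using ex_good_arrangements_descent_sum_cong[OF deg i0] by blast
  have mset: "\<forall>i<n. mset (a i) = g i" using good by (simp add: good_arrangement_def)
  have "\<forall>i<n. length (a i) = r" using mset deg by (metis size_mset)
  moreover have "(\<Sum>i<n. int (card (descent_set (a i)))) = int r * (int n - 2)"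
    using good defect0
    by (simp add: defect_def good_arrangement_def descents_eq_card_descent_set)
  moreover have "(\<Sum>i<n. sum_list (a i)) = of_int s"
    using mset s by (simp add: sum_mset_sum_list[symmetric])
  ultimately show ?thesis
    using ex_par_deg_sum_zero[OF _ _ _ cong] good by blast
qed

end
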